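(* Let $r\geq 3$ and let $G_1$ be the pan graph with vertex set $\{u_0,u_1,\dots,u_r\}$ and edge set $$E(G_1)=\{u_0u_r,\ u_1u_2,\ u_{r-1}u_r\}\cup\{u_ju_{j+2}: 1\le j\le r-2\}$$ (so $u_1,\dots,u_r$ span a cycle of length $r$ and $u_0$ is a pendant vertex attached to $u_r$). Let $H_0,H_1,\dots,H_r$ be connected graphs, each with at least two vertices, with $n_i=|V(H_i)|$, ordered so that $n_0\le n_1\le\dots\le n_r$. Let $\Gamma=G_1\diamond(H_0,H_1,\dots,H_r)$ be the generalized edge corona in which every vertex of $H_0$ is joined to $u_0$ and $u_r$, every vertex of $H_1$ is joined to $u_1$ and $u_2$, for each $j\in\{1,\dots,r-2\}$ every vertex of $H_{j+1}$ is joined to $u_j$ and $u_{j+2}$, and every vertex of $H_r$ is joined to $u_{r-1}$ and $u_r$. Suppose that (a) $\Delta(H_0)<\delta(H_1)$; (b) $\Delta(H_i)\le\delta(H_{i+1})$ for all $i\in\{1,\dots,r-1\}$; (c) $d'(u_0)\le\delta'(H_i)$ for all $i\in\{0,1,\dots,r\}$; (d) $\Delta'(H_r)\le d'(u_1)$. Then $\Gamma$ is antimagic.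
   Context: All graphs are simple and undirected. A graph $G$ is antimagic if there is a bijection $f:E(G)\to\{1,2,\dots,|E(G)|\}$ such that the vertex sums $w(v)=\sum_{e\ni v}f(e)$ are pairwise distinct over all vertices $v$. For a graph $G$ with $m$ edges $e_1,\dots,e_m$ and graphs $H_1,\dots,H_m$, the generalized edge corona $G\diamond(H_1,\dots,H_m)$ is obtained from disjoint copies of $G,H_1,\dots,H_m$ by joining both end vertices of $e_i$ to every vertex of $H_i$, for each $i$. $\Delta(H)$ and $\delta(H)$ denote the maximum and minimum degree of $H$ itself. For a vertex $v$ of $\Gamma$, $d'(v)$ denotes its degree in $\Gamma$; $\Delta'(H_i)$ and $\delta'(H_i)$ denote the maximum and minimum of $d'(v)$ over $v\in V(H_i)$ (so $d'(v)=\deg_{H_i}(v)+2$ for $v\in V(H_i)$). *)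

theory Defs
  imports Main
begin

definition simple_graph :: "'a set \<Rightarrow> 'a set set \<Rightarrow> bool" where
  "simple_graph V E \<longleftrightarrow> finite V \<and> (\<forall>e\<in>E. e \<subseteq> V \<and> card e = 2)"

definition adj_rel :: "'a set set \<Rightarrow> ('a \<times> 'a) set" where
  "adj_rel E = {(x, y). {x, y} \<in> E}"

definition connected_graph :: "'a set \<Rightarrow> 'a set set \<Rightarrow> bool" where
  "connected_graph V E \<longleftrightarrow> (\<forall>x\<in>V. \<forall>y\<in>V. (x, y) \<in> (adj_rel E)\<^sup>*)"

definition degree :: "'a set set \<Rightarrow> 'a \<Rightarrow> nat" where
  "degree E v = card {e \<in> E. v \<in> e}"

definition max_degree :: "'a set \<Rightarrow> 'a set set \<Rightarrow> nat" where
  "max_degree V E = Max (degree E ` V)"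

definition min_degree :: "'a set \<Rightarrow> 'a set set \<Rightarrow> nat" where
  "min_degree V E = Min (degree E ` V)"

definition antimagic :: "'a set \<Rightarrow> 'a set set \<Rightarrow> bool" where
  "antimagic V E \<longleftrightarrow> (\<exists>f :: 'a set \<Rightarrow> nat. bij_betw f E {1..card E} \<and>
      inj_on (\<lambda>v. \<Sum>e\<in>{e \<in> E. v \<in> e}. f e) V)"

text \<open>The base graph G has vertices VG, edges EG, and the
  edges are indexed by I via ed (ed i is the i-th edge); H i = (VH i, EH i) is attached
  to edge ed i.\<close>
definition corona_V :: "'b set \<Rightarrow> 'i set \<Rightarrow> ('i \<Rightarrow> 'a set) \<Rightarrow> ('b + 'i \<times> 'a) set" where
  "corona_V VG I VH = Inl ` VG \<union> {Inr (i, x) | i x. i \<in> I \<and> x \<in> VH i}"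

definition corona_E :: "'b set set \<Rightarrow> 'i set \<Rightarrow> ('i \<Rightarrow> 'b set) \<Rightarrow> ('i \<Rightarrow> 'a set)
    \<Rightarrow> ('i \<Rightarrow> 'a set set) \<Rightarrow> ('b + 'i \<times> 'a) set set" where
  "corona_E EG I ed VH EH =
     (image Inl) ` EG
     \<union> {(\<lambda>x. Inr (i, x)) ` e | i e. i \<in> I \<and> e \<in> EH i}
     \<union> {{Inl u, Inr (i, x)} | i u x. i \<in> I \<and> u \<in> ed i \<and> x \<in> VH i}"

text \<open>The pan graph G1 on vertices u_0..u_r (u_k represented by k).\<close>
definition pan_V :: "nat \<Rightarrow> nat set" where
  "pan_V r = {0..r}"

definition pan_E :: "nat \<Rightarrow> nat set set" where
  "pan_E r = {{0, r}, {1, 2}, {r - 1, r}} \<union> {{j, j + 2} | j. 1 \<le> j \<and> j \<le> r - 2}"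

text \<open>The edge to which H_i is attached.\<close>
definition pan_edge :: "nat \<Rightarrow> nat \<Rightarrow> nat set" where
  "pan_edge r i = (if i = 0 then {0, r} else if i = 1 then {1, 2}
                   else if i = r then {r - 1, r} else {i - 1, i + 1})"

end

theory Submission
  imports Defs "HOL-Library.Disjoint_Sets"
begin

text \<open>
  Sort the edges of \<open>\<Gamma>\<close> into classes: the spokes from \<open>H\<^sub>0\<close> to \<open>u\<^sub>0\<close>, the edge
  \<open>u\<^sub>0u\<^sub>r\<close>, the edges inside \<open>H\<^sub>0, \<dots>, H\<^sub>r\<close>, the spokes from \<open>H\<^sub>0\<close> to
  \<open>u\<^sub>r\<close>, then for \<open>i = 1, \<dots>, r\<close> the spokes from \<open>H\<^sub>i\<close> to the lower and then to the
  upper end of its base edge \<open>e\<^sub>i\<close>, and finally \<open>e\<^sub>1, \<dots>, e\<^sub>r\<close>. For any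
  bijection onto \<open>{1..|E|}\<close> that increases with the class, the vertex sums satisfy
  \<open>w(u\<^sub>0) < w(H\<^sub>0) < \<dots> < w(H\<^sub>r) < w(u\<^sub>1) < \<dots> < w(u\<^sub>r)\<close>: in each comparison the
  edges at the smaller vertex are matched by at least as many edges of higher class at the larger
  one, the counts coming from \<open>n\<^sub>0 \<le> \<dots> \<le> n\<^sub>r\<close> and the degree conditions (a)-(d).
  Such a bijection may still permute the labels of the spokes from \<open>H\<^sub>i\<close> to the upper end of
  \<open>e\<^sub>i\<close>; giving them in the order of the rest of the vertex sums separates the vertices of
  \<open>H\<^sub>i\<close>.
\<close>

section \<open>Sums and monotone bijections\<close>

lemma sum_less_sum_if_all_less:
  fixes g :: "'e \<Rightarrow> nat"
  assumes "finite X" "finite Y" "X \<noteq> {}" "card X \<le> card Y"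
    and less: "\<And>a b. a \<in> X \<Longrightarrow> b \<in> Y \<Longrightarrow> g a < g b"
  shows "sum g X < sum g Y"
proof -
  define M where "M = Max (g ` X)"
  have le_M: "g a \<le> M" if "a \<in> X" for a
    using assms(1) that by (simp add: M_def)
  have "M \<in> g ` X" using assms(1,3) by (simp add: M_def)
  then obtain a0 where "a0 \<in> X" "g a0 = M" by auto
  then have M_less: "M + 1 \<le> g b" if "b \<in> Y" for b
    using less that by fastforce
  have "card X > 0" using assms(1,3) by (simp add: card_gt_0_iff)
  have "sum g X \<le> card X * M" using sum_bounded_above[of X g M] le_M by simp
  also have "\<dots> < card X * (M + 1)" using \<open>card X > 0\<close> by simp
  also have "\<dots> \<le> card Y * (M + 1)" using assms(4) by (rule mult_right_mono) simp
  also have "\<dots> \<le> sum g Y" using sum_bounded_below[of Y "M + 1" g] M_less by (simp add: mult.commute)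
  finally show ?thesis .
qed

lemma sum_le_sum_if_all_less:
  fixes g :: "'e \<Rightarrow> nat"
  assumes "finite X" "finite Y" "card X \<le> card Y"
    and "\<And>a b. a \<in> X \<Longrightarrow> b \<in> Y \<Longrightarrow> g a < g b"
  shows "sum g X \<le> sum g Y"
  using sum_less_sum_if_all_less[of X Y g] assms by (cases "X = {}") auto

lemma sum_less_sum_if_all_less_on_diff:
  fixes g :: "'e \<Rightarrow> nat"
  assumes "finite C" "finite D" "C - D \<noteq> {}" "card C \<le> card D"
    and "\<And>a b. a \<in> C - D \<Longrightarrow> b \<in> D - C \<Longrightarrow> g a < g b"
  shows "sum g C < sum g D"
proof -
  have "card (C - D) \<le> card (D - C)"
    using assms(1,2,4) card_Int_Diff[of C D] card_Int_Diff[of D C] by (simp add: Int_commute)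
  then have "sum g (C - D) < sum g (D - C)"
    using sum_less_sum_if_all_less[of "C - D" "D - C" g] assms by blast
  then show ?thesis
    using assms(1,2) sum.Int_Diff[of C g D] sum.Int_Diff[of D g C] by (simp add: Int_commute)
qed

lemma exists_bij_betw_key_monotone:
  fixes key :: "'e \<Rightarrow> 'k::linorder" and L :: "'l::linorder set"
  assumes "finite X" "finite L" "card X = card L"
  obtains \<tau> where "bij_betw \<tau> X L" "\<And>x y. x \<in> X \<Longrightarrow> y \<in> X \<Longrightarrow> key x < key y \<Longrightarrow> \<tau> x < \<tau> y"
  using assms
proof (induction "card X" arbitrary: X L thesis)
  case 0
  then show ?case by (auto simp: bij_betw_def)
next
  case (Suc n)
  then have "X \<noteq> {}" "L \<noteq> {}" by auto
  have "Max (key ` X) \<in> key ` X" using Suc.prems(2) \<open>X \<noteq> {}\<close> by simp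
  then obtain x0 where x0: "x0 \<in> X" "key x0 = Max (key ` X)" by auto
  define m0 where "m0 = Max L"
  have m0: "m0 \<in> L" "\<And>l. l \<in> L \<Longrightarrow> l \<le> m0"
    using \<open>L \<noteq> {}\<close> Suc.prems(3) by (auto simp: m0_def)
  have "n = card (X - {x0})" "card (X - {x0}) = card (L - {m0})"
    using Suc.hyps(2) Suc.prems(2-4) x0(1) m0(1) by auto
  then obtain \<tau> where \<tau>: "bij_betw \<tau> (X - {x0}) (L - {m0})"
    "\<And>x y. x \<in> X - {x0} \<Longrightarrow> y \<in> X - {x0} \<Longrightarrow> key x < key y \<Longrightarrow> \<tau> x < \<tau> y"
    using Suc.hyps(1)[where X = "X - {x0}" and L = "L - {m0}"] Suc.prems(2,3) by blast
  define \<sigma> where "\<sigma> = \<tau>(x0 := m0)"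
  have "bij_betw \<sigma> (X - {x0}) (L - {m0})"
    using \<tau>(1) by (rule bij_betw_cong[THEN iffD1, rotated]) (simp add: \<sigma>_def)
  moreover have "bij_betw \<sigma> {x0} {m0}" by (simp add: \<sigma>_def bij_betw_def)
  ultimately have "bij_betw \<sigma> ((X - {x0}) \<union> {x0}) ((L - {m0}) \<union> {m0})"
    by (rule bij_betw_combine) simp
  then have bij: "bij_betw \<sigma> X L" using x0 m0 by (simp add: insert_absorb)
  have "\<sigma> x < \<sigma> y" if "x \<in> X" "y \<in> X" "key x < key y" for x y
  proof (cases "y = x0")
    case True
    then have "\<sigma> x \<in> L - {m0}"
      using that \<tau>(1) by (auto simp: \<sigma>_def bij_betw_def)
    then show ?thesis using True m0 by (force simp: \<sigma>_def)
  next
    case False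
    have "key y \<le> key x0" using x0 Suc.prems(2) \<open>y \<in> X\<close> by simp
    then have "x \<noteq> x0" using that by auto
    then show ?thesis using False \<tau>(2) that by (simp add: \<sigma>_def)
  qed
  then show ?case using bij Suc.prems(1) by blast
qed

lemma bij_betw_override_on:
  assumes "bij_betw f E L" "D \<subseteq> E" "bij_betw g D (f ` D)"
  shows "bij_betw (override_on f g D) E L"
proof -
  have "inj_on f E" using assms(1) by (simp add: bij_betw_def)
  then have "bij_betw (\<lambda>x. if x \<in> D then g x else f x) (D \<union> (E - D)) (f ` D \<union> f ` (E - D))"
    using assms(2,3) by (intro bij_betw_disjoint_Un) (auto simp: bij_betw_def inj_on_def)
  moreover have "D \<union> (E - D) = E" "f ` D \<union> f ` (E - D) = L"
    using assms(1,2) by (auto simp: bij_betw_def)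
  ultimately show ?thesis by (simp add: override_on_def)
qed

lemma exists_bij_betw_image_tie_monotone:
  fixes key :: "'e \<Rightarrow> 'k" and tie :: "'e \<Rightarrow> 'm::linorder" and f0 :: "'e \<Rightarrow> 'l::linorder"
  assumes "finite D" "inj_on f0 D"
  obtains t where "bij_betw t D (f0 ` D)"
    "\<And>e. e \<in> D \<Longrightarrow> t e \<in> f0 ` {d \<in> D. key d = key e}"
    "\<And>e e'. e \<in> D \<Longrightarrow> e' \<in> D \<Longrightarrow> key e = key e' \<Longrightarrow> tie e < tie e' \<Longrightarrow> t e < t e'"
proof -
  define B where "B k = {e \<in> D. key e = k}" for k
  have "\<exists>T. bij_betw T (B k) (f0 ` B k) \<and>
            (\<forall>e\<in>B k. \<forall>e'\<in>B k. tie e < tie e' \<longrightarrow> T e < T e')" for k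
  proof -
    have card: "card (B k) = card (f0 ` B k)"
      using assms(2) by (simp add: card_image inj_on_subset B_def)
    have fin: "finite (B k)" using assms(1) by (simp add: B_def)
    obtain T where "bij_betw T (B k) (f0 ` B k)"
      "\<And>e e'. e \<in> B k \<Longrightarrow> e' \<in> B k \<Longrightarrow> tie e < tie e' \<Longrightarrow> T e < T e'"
      using exists_bij_betw_key_monotone[OF fin finite_imageI[OF fin] card] by blast
    then show ?thesis by blast
  qed
  then obtain T where T_bij: "\<And>k. bij_betw (T k) (B k) (f0 ` B k)"
    and T_mono: "\<And>k e e'. e \<in> B k \<Longrightarrow> e' \<in> B k \<Longrightarrow> tie e < tie e' \<Longrightarrow> T k e < T k e'"
    by metis
  define t where "t e = T (key e) e" for e
  have "bij_betw t (\<Union>k\<in>key ` D. B k) (\<Union>k\<in>key ` D. f0 ` B k)"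
  proof (rule bij_betw_UNION_disjoint)
    show "disjoint_family_on (\<lambda>k. f0 ` B k) (key ` D)"
      unfolding disjoint_family_on_def
    proof (intro ballI impI)
      fix k k' :: 'k assume "k \<noteq> k'"
      then have "B k \<inter> B k' = {}" by (auto simp: B_def)
      moreover have "B k \<subseteq> D" "B k' \<subseteq> D" by (auto simp: B_def)
      ultimately show "f0 ` B k \<inter> f0 ` B k' = {}"
        by (simp add: inj_on_image_Int[OF assms(2), symmetric])
    qed
    show "bij_betw t (B k) (f0 ` B k)" for k
      using T_bij[of k] by (rule bij_betw_cong[THEN iffD1, rotated]) (simp add: t_def B_def)
  qed
  moreover have "(\<Union>k\<in>key ` D. B k) = D" by (auto simp: B_def)
  ultimately have "bij_betw t D (f0 ` D)" by (simp add: image_UN[symmetric])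
  moreover have "t e \<in> f0 ` {d \<in> D. key d = key e}" if "e \<in> D" for e
    using T_bij[of "key e"] that by (auto simp: t_def B_def bij_betw_def)
  moreover have "t e < t e'" if "e \<in> D" "e' \<in> D" "key e = key e'" "tie e < tie e'" for e e'
    using that T_mono[of e "key e" e'] by (simp add: t_def B_def)
  ultimately show thesis using that by blast
qed

lemma exists_key_monotone_bij_refining_ties:
  fixes key :: "'e \<Rightarrow> 'k::linorder" and tie :: "'e \<Rightarrow> 'm::linorder"
    and f0 :: "'e \<Rightarrow> 'l::linorder"
  assumes "finite D" "D \<subseteq> E" and f0_bij: "bij_betw f0 E L"
    and f0_mono: "\<And>e e'. e \<in> E \<Longrightarrow> e' \<in> E \<Longrightarrow> key e < key e' \<Longrightarrow> f0 e < f0 e'"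
  obtains f where "bij_betw f E L"
    "\<And>e e'. e \<in> E \<Longrightarrow> e' \<in> E \<Longrightarrow> key e < key e' \<Longrightarrow> f e < f e'"
    "\<And>e. e \<in> E - D \<Longrightarrow> f e = f0 e"
    "\<And>e e'. e \<in> D \<Longrightarrow> e' \<in> D \<Longrightarrow> key e = key e' \<Longrightarrow> tie e < tie e' \<Longrightarrow> f e < f e'"
proof -
  have "inj_on f0 D" using f0_bij \<open>D \<subseteq> E\<close> by (auto simp: bij_betw_def intro: inj_on_subset)
  then obtain t where t_bij: "bij_betw t D (f0 ` D)"
    and t_key: "\<And>e. e \<in> D \<Longrightarrow> t e \<in> f0 ` {d \<in> D. key d = key e}"
    and t_tie: "\<And>e e'. e \<in> D \<Longrightarrow> e' \<in> D \<Longrightarrow> key e = key e' \<Longrightarrow> tie e < tie e' \<Longrightarrow> t e < t e'"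
    using exists_bij_betw_image_tie_monotone[OF \<open>finite D\<close>, of f0 key tie] by blast
  define f where "f = override_on f0 t D"
  have same_key: "\<exists>d\<in>E. key d = key e \<and> f e = f0 d" if "e \<in> E" for e
    using that t_key[of e] \<open>D \<subseteq> E\<close> by (cases "e \<in> D") (auto simp: f_def)
  show thesis
  proof (rule that)
    show "bij_betw f E L" using bij_betw_override_on f0_bij \<open>D \<subseteq> E\<close> t_bij by (simp add: f_def)
    show "f e < f e'" if "e \<in> E" "e' \<in> E" and less: "key e < key e'" for e e'
    proof -
      obtain d d' where "d \<in> E" "d' \<in> E" "key d = key e" "key d' = key e'" "f e = f0 d" "f e' = f0 d'"
        using same_key \<open>e \<in> E\<close> \<open>e' \<in> E\<close> by metis
      then show ?thesis using f0_mono less by simp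
    qed
  qed (use t_tie in \<open>auto simp: f_def\<close>)
qed

section \<open>The pan graph\<close>

locale pan_graph =
  fixes r :: nat
  assumes three_le_r: "3 \<le> r"
begin

definition pan_lo :: "nat \<Rightarrow> nat" where
  "pan_lo i = (if i = 0 then 0 else if i = 1 then 1 else i - 1)"

definition pan_hi :: "nat \<Rightarrow> nat" where
  "pan_hi i = (if i = 0 then r else if i = 1 then 2 else if i = r then r else i + 1)"

lemma pan_edge_eq: "i \<le> r \<Longrightarrow> pan_edge r i = {pan_lo i, pan_hi i}"
  using three_le_r by (auto simp: pan_edge_def pan_lo_def pan_hi_def)

lemma pan_lo_less_hi: "i \<le> r \<Longrightarrow> pan_lo i < pan_hi i"
  using three_le_r by (auto simp: pan_lo_def pan_hi_def)

lemma pan_hi_le: "i \<le> r \<Longrightarrow> pan_hi i \<le> r"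
  using three_le_r by (auto simp: pan_hi_def)

lemma inj_on_pan_edge: "inj_on (pan_edge r) {0..r}"
proof (rule inj_onI)
  fix i i' assume i: "i \<in> {0..r}" "i' \<in> {0..r}" and eq: "pan_edge r i = pan_edge r i'"
  then have "pan_lo i = pan_lo i' \<and> pan_hi i = pan_hi i'"
    using pan_lo_less_hi[of i] pan_lo_less_hi[of i'] by (auto simp: pan_edge_eq doubleton_eq_iff)
  then show "i = i'" using i three_le_r by (auto simp: pan_lo_def pan_hi_def split: if_splits)
qed

lemma pan_E_eq_image: "pan_E r = pan_edge r ` {0..r}"
proof
  show "pan_E r \<subseteq> pan_edge r ` {0..r}"
  proof
    fix e assume "e \<in> pan_E r"
    then consider "e = {0, r}" | "e = {1, 2}" | "e = {r - 1, r}"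
      | j where "1 \<le> j" "j \<le> r - 2" "e = {j, j + 2}"
      by (auto simp: pan_E_def)
    then show "e \<in> pan_edge r ` {0..r}"
    proof cases
      case 1 then show ?thesis by (intro image_eqI[of _ _ 0]) (auto simp: pan_edge_def)
    next
      case 2 then show ?thesis using three_le_r by (intro image_eqI[of _ _ 1]) (auto simp: pan_edge_def)
    next
      case 3 then show ?thesis using three_le_r by (intro image_eqI[of _ _ r]) (auto simp: pan_edge_def)
    next
      case 4 then show ?thesis by (intro image_eqI[of _ _ "j + 1"]) (auto simp: pan_edge_def)
    qed
  qed
next
  show "pan_edge r ` {0..r} \<subseteq> pan_E r"
  proof
    fix e assume "e \<in> pan_edge r ` {0..r}"
    then obtain i where i: "i \<le> r" "e = pan_edge r i" by auto
    show "e \<in> pan_E r"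
    proof (cases "i = 0 \<or> i = 1 \<or> i = r")
      case True then show ?thesis using i by (auto simp: pan_edge_def pan_E_def)
    next
      case False
      then have "e = {i - 1, (i - 1) + 2}" "1 \<le> i - 1" "i - 1 \<le> r - 2"
        using i by (auto simp: pan_edge_def)
      then show ?thesis unfolding pan_E_def by blast
    qed
  qed
qed

definition lower_edge :: "nat \<Rightarrow> nat" where
  "lower_edge j = (if j \<le> 2 then 1 else j - 1)"

definition upper_edge :: "nat \<Rightarrow> nat" where
  "upper_edge j = (if j = r then r else j + 1)"

lemma mem_pan_edge_iff:
  "j \<le> r \<Longrightarrow> i \<le> r \<Longrightarrow> j \<in> pan_edge r i \<longleftrightarrow>
     (i = 0 \<and> (j = 0 \<or> j = r)) \<or> (1 \<le> j \<and> (i = lower_edge j \<or> i = upper_edge j))"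
  using three_le_r by (auto simp: pan_edge_def lower_edge_def upper_edge_def)

lemma lower_upper_edge:
  assumes "1 \<le> j" "j \<le> r"
  shows "1 \<le> lower_edge j" "lower_edge j < upper_edge j" "upper_edge j \<le> r"
  using assms three_le_r by (auto simp: lower_edge_def upper_edge_def)

lemma lower_upper_edge_mono: "j \<le> k \<Longrightarrow> lower_edge j \<le> lower_edge k \<and> upper_edge j \<le> upper_edge k"
  by (auto simp: lower_edge_def upper_edge_def)

lemma mem_pan_edge_lower_upper:
  "1 \<le> j \<Longrightarrow> j \<le> r \<Longrightarrow> j \<in> pan_edge r (lower_edge j) \<and> j \<in> pan_edge r (upper_edge j)"
  using mem_pan_edge_iff[of j "lower_edge j"] mem_pan_edge_iff[of j "upper_edge j"] lower_upper_edge[of j]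
  by auto

lemma pan_edges_at_eq:
  "1 \<le> j \<Longrightarrow> j < r \<Longrightarrow> {i. i \<le> r \<and> j \<in> pan_edge r i} = {lower_edge j, upper_edge j}"
  using mem_pan_edge_iff[of j] lower_upper_edge[of j] by auto

lemma pan_edges_at_superset:
  "1 \<le> j \<Longrightarrow> j \<le> r \<Longrightarrow> {lower_edge j, upper_edge j} \<subseteq> {i. i \<le> r \<and> j \<in> pan_edge r i}"
  using mem_pan_edge_lower_upper[of j] lower_upper_edge[of j] by auto

end

section \<open>The generalized edge corona of the pan\<close>

locale pan_corona = pan_graph +
  fixes VH :: "nat \<Rightarrow> 'a set" and EH :: "nat \<Rightarrow> 'a set set"
  assumes simple: "\<And>i. i \<le> r \<Longrightarrow> simple_graph (VH i) (EH i)"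
    and VH_nonempty: "\<And>i. i \<le> r \<Longrightarrow> VH i \<noteq> {}"
    and card_VH_le_Suc: "\<And>i. i < r \<Longrightarrow> card (VH i) \<le> card (VH (Suc i))"
    and max_degree_le_min_degree_Suc:
      "\<And>i. i < r \<Longrightarrow> max_degree (VH i) (EH i) \<le> min_degree (VH (Suc i)) (EH (Suc i))"
begin

lemma finite_VH: "i \<le> r \<Longrightarrow> finite (VH i)"
  using simple by (simp add: simple_graph_def)

lemma edge_of_H: "i \<le> r \<Longrightarrow> e \<in> EH i \<Longrightarrow> e \<subseteq> VH i \<and> card e = 2"
  using simple by (simp add: simple_graph_def)

lemma finite_EH: "i \<le> r \<Longrightarrow> finite (EH i)"
  using edge_of_H finite_VH by (meson Pow_iff finite_Pow_iff finite_subset subsetI)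

lemma card_VH_mono: "i \<le> i' \<Longrightarrow> i' \<le> r \<Longrightarrow> card (VH i) \<le> card (VH i')"
proof (induction i' rule: dec_induct)
  case (step k)
  then show ?case using card_VH_le_Suc[of k] by simp
qed simp

lemma degree_le_max_degree: "i \<le> r \<Longrightarrow> x \<in> VH i \<Longrightarrow> degree (EH i) x \<le> max_degree (VH i) (EH i)"
  using finite_VH by (simp add: max_degree_def)

lemma min_degree_le_degree: "i \<le> r \<Longrightarrow> x \<in> VH i \<Longrightarrow> min_degree (VH i) (EH i) \<le> degree (EH i) x"
  using finite_VH by (simp add: min_degree_def)

lemma max_degree_le_min_degree:
  "i < i' \<Longrightarrow> i' \<le> r \<Longrightarrow> max_degree (VH i) (EH i) \<le> min_degree (VH i') (EH i')"
proof (induction i' rule: less_induct)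
  case (less k)
  show ?case
  proof (cases "k = Suc i")
    case True
    then show ?thesis using max_degree_le_min_degree_Suc[of i] less.prems by simp
  next
    case False
    then obtain k' where k': "k = Suc k'" "i < k'" using less.prems by (cases k) auto
    obtain x where "x \<in> VH k'" using VH_nonempty[of k'] k' less.prems by auto
    moreover have "k' \<le> r" using k' less.prems by simp
    ultimately have "min_degree (VH k') (EH k') \<le> max_degree (VH k') (EH k')"
      using min_degree_le_degree[of k' x] degree_le_max_degree[of k' x] by simp
    then show ?thesis
      using less.IH[of k'] max_degree_le_min_degree_Suc[of k'] k' less.prems by simp
  qed
qed

lemma degree_mono:
  "i < i' \<Longrightarrow> i' \<le> r \<Longrightarrow> x \<in> VH i \<Longrightarrow> y \<in> VH i' \<Longrightarrow> degree (EH i) x \<le> degree (EH i') y"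
  using max_degree_le_min_degree degree_le_max_degree min_degree_le_degree
  by (meson le_trans less_imp_le_nat)

definition E :: "(nat + nat \<times> 'a) set set" where
  "E = corona_E (pan_E r) {0..r} (pan_edge r) VH EH"

definition V :: "(nat + nat \<times> 'a) set" where
  "V = corona_V (pan_V r) {0..r} VH"

definition incident :: "nat + nat \<times> 'a \<Rightarrow> (nat + nat \<times> 'a) set set" where
  "incident v = {e \<in> E. v \<in> e}"

definition base_edge :: "nat \<Rightarrow> (nat + nat \<times> 'a) set" where
  "base_edge i = Inl ` pan_edge r i"

definition inner_edge :: "nat \<Rightarrow> 'a set \<Rightarrow> (nat + nat \<times> 'a) set" where
  "inner_edge i e = (\<lambda>x. Inr (i, x)) ` e"

definition spoke :: "nat \<Rightarrow> nat \<Rightarrow> 'a \<Rightarrow> (nat + nat \<times> 'a) set" where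
  "spoke i u x = {Inl u, Inr (i, x)}"

definition inner_incident :: "nat \<Rightarrow> 'a \<Rightarrow> (nat + nat \<times> 'a) set set" where
  "inner_incident i x = inner_edge i ` {e \<in> EH i. x \<in> e}"

definition spokes :: "nat \<Rightarrow> nat \<Rightarrow> (nat + nat \<times> 'a) set set" where
  "spokes i u = spoke i u ` VH i"

lemma E_eq: "E = base_edge ` {0..r} \<union> {inner_edge i e | i e. i \<le> r \<and> e \<in> EH i}
   \<union> {spoke i u x | i u x. i \<le> r \<and> u \<in> pan_edge r i \<and> x \<in> VH i}"
  unfolding E_def corona_E_def pan_E_eq_image image_image base_edge_def inner_edge_def spoke_def
    atLeastAtMost_iff by simp

lemma E_cases:
  assumes "e \<in> E"
  obtains (base) i where "i \<le> r" "e = base_edge i"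
   | (inner) i e' where "i \<le> r" "e' \<in> EH i" "e = inner_edge i e'"
   | (lower_spoke) i x where "i \<le> r" "x \<in> VH i" "e = spoke i (pan_lo i) x"
   | (upper_spoke) i x where "i \<le> r" "x \<in> VH i" "e = spoke i (pan_hi i) x"
  using assms unfolding E_eq by (auto simp: pan_edge_eq)

lemma V_cases:
  assumes "v \<in> V"
  obtains (base) j where "j \<le> r" "v = Inl j" | (inner) i x where "i \<le> r" "x \<in> VH i" "v = Inr (i, x)"
  using assms unfolding V_def corona_V_def pan_V_def by auto

lemma base_edge_in_E: "i \<le> r \<Longrightarrow> base_edge i \<in> E"
  by (auto simp: E_eq)

lemma inner_edge_in_E: "i \<le> r \<Longrightarrow> e \<in> EH i \<Longrightarrow> inner_edge i e \<in> E"
  unfolding E_eq by blast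

lemma spoke_in_E: "i \<le> r \<Longrightarrow> u \<in> pan_edge r i \<Longrightarrow> x \<in> VH i \<Longrightarrow> spoke i u x \<in> E"
  unfolding E_eq by blast

lemma spokes_subset_E: "i \<le> r \<Longrightarrow> u \<in> pan_edge r i \<Longrightarrow> spokes i u \<subseteq> E"
  using spoke_in_E by (auto simp: spokes_def)

lemma E_subset_Pow_V: "E \<subseteq> Pow V"
proof
  fix e assume "e \<in> E"
  then show "e \<in> Pow V"
  proof (cases rule: E_cases)
    case (base i)
    then show ?thesis using pan_edge_eq pan_lo_less_hi pan_hi_le
      by (fastforce simp: V_def corona_V_def pan_V_def base_edge_def)
  next
    case (inner i e')
    then show ?thesis using edge_of_H[of i e'] by (auto simp: V_def corona_V_def inner_edge_def)
  next
    case (lower_spoke i x)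
    then show ?thesis using pan_lo_less_hi[of i] pan_hi_le[of i]
      by (auto simp: V_def corona_V_def pan_V_def spoke_def)
  next
    case (upper_spoke i x)
    then show ?thesis using pan_hi_le[of i] by (auto simp: V_def corona_V_def pan_V_def spoke_def)
  qed
qed

lemma finite_V: "finite V"
proof -
  have "V = Inl ` {0..r} \<union> Inr ` (SIGMA i:{0..r}. VH i)"
    by (auto simp: V_def corona_V_def pan_V_def)
  moreover have "finite (SIGMA i:{0..r}. VH i)" using finite_VH by (intro finite_SigmaI) auto
  ultimately show ?thesis by simp
qed

lemma finite_E: "finite E"
  using finite_subset[OF E_subset_Pow_V] finite_V by simp

lemma finite_incident: "finite (incident v)"
  using finite_E by (simp add: incident_def)

lemma spoke_eq_iff: "spoke i u x = spoke i' u' x' \<longleftrightarrow> i = i' \<and> u = u' \<and> x = x'"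
  by (auto simp: spoke_def doubleton_eq_iff)

lemma Inr_notin_base_edge: "Inr z \<notin> base_edge i"
  by (auto simp: base_edge_def)

lemma Inl_notin_inner_edge: "Inl u \<notin> inner_edge i e"
  by (auto simp: inner_edge_def)

lemma Inr_in_inner_edge_iff: "Inr (i', x) \<in> inner_edge i e \<longleftrightarrow> i' = i \<and> x \<in> e"
  by (auto simp: inner_edge_def)

lemma Inr_in_spoke_iff: "Inr (i', x') \<in> spoke i u x \<longleftrightarrow> i' = i \<and> x' = x"
  by (auto simp: spoke_def)

lemma Inl_in_spoke_iff: "Inl u' \<in> spoke i u x \<longleftrightarrow> u' = u"
  by (auto simp: spoke_def)

lemma Inl_in_base_edge_iff: "Inl u \<in> base_edge i \<longleftrightarrow> u \<in> pan_edge r i"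
  by (auto simp: base_edge_def)

lemma base_edge_inject: "i \<le> r \<Longrightarrow> i' \<le> r \<Longrightarrow> base_edge i = base_edge i' \<longleftrightarrow> i = i'"
  using inj_on_pan_edge by (auto simp: base_edge_def inj_image_eq_iff inj_on_def)

lemma incident_Inr:
  assumes "i \<le> r" "x \<in> VH i"
  shows "incident (Inr (i, x)) = inner_incident i x \<union> {spoke i (pan_lo i) x, spoke i (pan_hi i) x}"
proof
  show "incident (Inr (i, x)) \<subseteq> inner_incident i x \<union> {spoke i (pan_lo i) x, spoke i (pan_hi i) x}"
  proof
    fix e assume "e \<in> incident (Inr (i, x))"
    then have "e \<in> E" "Inr (i, x) \<in> e" by (auto simp: incident_def)
    from this(1) show "e \<in> inner_incident i x \<union> {spoke i (pan_lo i) x, spoke i (pan_hi i) x}"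
      by (cases rule: E_cases)
        (use \<open>Inr (i, x) \<in> e\<close> in \<open>auto simp: Inr_notin_base_edge Inr_in_inner_edge_iff
          Inr_in_spoke_iff inner_incident_def\<close>)
  qed
  show "inner_incident i x \<union> {spoke i (pan_lo i) x, spoke i (pan_hi i) x} \<subseteq> incident (Inr (i, x))"
    using assms by (auto simp: incident_def inner_incident_def inner_edge_in_E spoke_in_E pan_edge_eq
      Inr_in_inner_edge_iff Inr_in_spoke_iff)
qed

lemma finite_inner_incident: "i \<le> r \<Longrightarrow> finite (inner_incident i x)"
  using finite_EH by (simp add: inner_incident_def)

lemma inner_incident_subset_E: "i \<le> r \<Longrightarrow> inner_incident i x \<subseteq> E"
  by (auto simp: inner_incident_def inner_edge_in_E)

lemma card_inner_incident: "i \<le> r \<Longrightarrow> card (inner_incident i x) = degree (EH i) x"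
proof -
  have "inj (inner_edge i)"
    by (rule injI) (auto simp: inner_edge_def inj_image_eq_iff inj_def)
  then show ?thesis by (simp add: inner_incident_def degree_def card_image inj_on_subset)
qed

lemma spoke_notin_inner_incident: "spoke i' u y \<notin> inner_incident i x"
  using Inl_notin_inner_edge by (force simp: inner_incident_def spoke_def)

lemma lower_spoke_neq_upper_spoke: "i \<le> r \<Longrightarrow> spoke i (pan_lo i) x \<noteq> spoke i (pan_hi i) x"
  using pan_lo_less_hi[of i] by (simp add: spoke_eq_iff)

lemma card_incident_Inr:
  assumes "i \<le> r" "x \<in> VH i"
  shows "card (incident (Inr (i, x))) = degree (EH i) x + 2"
  using assms finite_inner_incident card_inner_incident spoke_notin_inner_incident
    lower_spoke_neq_upper_spoke by (simp add: incident_Inr card_Un_disjoint)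

definition attachment :: "nat \<Rightarrow> nat \<Rightarrow> (nat + nat \<times> 'a) set set" where
  "attachment i j = insert (base_edge i) (spokes i j)"

lemma incident_Inl:
  assumes "j \<le> r"
  shows "incident (Inl j) = (\<Union>i\<in>{i. i \<le> r \<and> j \<in> pan_edge r i}. attachment i j)"
proof
  show "incident (Inl j) \<subseteq> (\<Union>i\<in>{i. i \<le> r \<and> j \<in> pan_edge r i}. attachment i j)"
  proof
    fix e assume "e \<in> incident (Inl j)"
    then have "e \<in> E" "Inl j \<in> e" by (auto simp: incident_def)
    from this(1) show "e \<in> (\<Union>i\<in>{i. i \<le> r \<and> j \<in> pan_edge r i}. attachment i j)"
      by (cases rule: E_cases)
        (use \<open>Inl j \<in> e\<close> in \<open>auto simp: Inl_in_base_edge_iff Inl_notin_inner_edge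
          Inl_in_spoke_iff attachment_def spokes_def pan_edge_eq\<close>)
  qed
  show "(\<Union>i\<in>{i. i \<le> r \<and> j \<in> pan_edge r i}. attachment i j) \<subseteq> incident (Inl j)"
    by (auto simp: incident_def attachment_def base_edge_in_E spoke_in_E spokes_def
      Inl_in_base_edge_iff Inl_in_spoke_iff)
qed

lemma finite_spokes: "i \<le> r \<Longrightarrow> finite (spokes i u)"
  using finite_VH by (simp add: spokes_def)

lemma card_spokes: "i \<le> r \<Longrightarrow> card (spokes i u) = card (VH i)"
  unfolding spokes_def by (rule card_image) (auto simp: inj_on_def spoke_eq_iff)

lemma base_edge_notin_spokes: "base_edge i \<notin> spokes i' u"
  by (auto simp: spokes_def spoke_def Inr_notin_base_edge)

lemma disjoint_spokes: "i \<noteq> i' \<Longrightarrow> spokes i u \<inter> spokes i' u' = {}"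
  by (auto simp: spokes_def spoke_eq_iff)

lemma finite_attachment: "i \<le> r \<Longrightarrow> finite (attachment i j)"
  using finite_spokes by (simp add: attachment_def)

lemma card_attachment: "i \<le> r \<Longrightarrow> card (attachment i j) = card (VH i) + 1"
  using finite_spokes card_spokes base_edge_notin_spokes by (simp add: attachment_def)

lemma disjoint_attachment:
  "i \<le> r \<Longrightarrow> i' \<le> r \<Longrightarrow> i \<noteq> i' \<Longrightarrow> attachment i j \<inter> attachment i' j = {}"
  using disjoint_spokes base_edge_inject base_edge_notin_spokes by (auto simp: attachment_def)

lemma card_incident_Inl_1: "card (incident (Inl 1)) = card (VH 1) + card (VH 2) + 2"
proof -
  have "lower_edge 1 = 1" "upper_edge 1 = 2" using three_le_r by (auto simp: lower_edge_def upper_edge_def)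
  then have "incident (Inl 1) = attachment 1 1 \<union> attachment 2 1"
    using incident_Inl[of 1] pan_edges_at_eq[of 1] three_le_r by simp
  then show ?thesis
    using card_Un_disjoint[OF finite_attachment finite_attachment disjoint_attachment] card_attachment
      three_le_r by simp
qed

definition h_index :: "(nat + nat \<times> 'a) set \<Rightarrow> nat" where
  "h_index e = (SOME i. \<exists>x. Inr (i, x) \<in> e)"

definition edge_class :: "(nat + nat \<times> 'a) set \<Rightarrow> nat" where
  "edge_class e =
    (if \<exists>z. Inr z \<in> e then
       (let i = h_index e in
        if Inl (pan_hi i) \<in> e then r + 3 + 2 * i
        else if Inl (pan_lo i) \<in> e then (if i = 0 then 0 else r + 2 + 2 * i)
        else i + 2)
     else (let i = SOME i. i \<le> r \<and> e = base_edge i in if i = 0 then 1 else 3 * r + 4 + i))"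

lemma edge_class_inner_edge: "i \<le> r \<Longrightarrow> e \<in> EH i \<Longrightarrow> edge_class (inner_edge i e) = i + 2"
proof -
  assume "i \<le> r" "e \<in> EH i"
  then obtain z where "z \<in> e" using edge_of_H[of i e] by fastforce
  then have "\<exists>z. Inr z \<in> inner_edge i e" "h_index (inner_edge i e) = i"
    by (auto simp: inner_edge_def h_index_def)
  then show ?thesis by (simp add: edge_class_def Inl_notin_inner_edge)
qed

lemma h_index_spoke: "h_index (spoke i u x) = i"
  unfolding h_index_def Inr_in_spoke_iff by auto

lemma Inr_in_spoke: "\<exists>z. Inr z \<in> spoke i u x"
  by (auto simp: spoke_def)

lemma edge_class_lower_spoke:
  "i \<le> r \<Longrightarrow> edge_class (spoke i (pan_lo i) x) = (if i = 0 then 0 else r + 2 + 2 * i)"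
  using pan_lo_less_hi[of i] Inr_in_spoke
  by (simp add: edge_class_def h_index_spoke Inl_in_spoke_iff)

lemma edge_class_upper_spoke: "edge_class (spoke i (pan_hi i) x) = r + 3 + 2 * i"
  using Inr_in_spoke by (simp add: edge_class_def h_index_spoke Inl_in_spoke_iff)

lemma edge_class_base_edge:
  "i \<le> r \<Longrightarrow> edge_class (base_edge i) = (if i = 0 then 1 else 3 * r + 4 + i)"
proof -
  assume "i \<le> r"
  then have "(SOME i'. i' \<le> r \<and> base_edge i = base_edge i') = i"
    using base_edge_inject by (intro some_equality) auto
  then show ?thesis by (simp add: edge_class_def Inr_notin_base_edge)
qed

lemma edge_class_spoke:
  "i \<le> r \<Longrightarrow> u \<in> pan_edge r i \<Longrightarrow>
    edge_class (spoke i u x) = (if u = pan_hi i then r + 3 + 2 * i else if i = 0 then 0 else r + 2 + 2 * i)"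
  using edge_class_lower_spoke edge_class_upper_spoke pan_lo_less_hi[of i] by (auto simp: pan_edge_eq)

lemma edge_class_le_1_iff:
  assumes "e \<in> E"
  shows "edge_class e \<le> 1 \<longleftrightarrow> Inl 0 \<in> e"
  using assms
proof (cases rule: E_cases)
  case (base i)
  then show ?thesis using mem_pan_edge_iff[of 0 i] three_le_r
    by (auto simp: edge_class_base_edge Inl_in_base_edge_iff)
next
  case (inner i e')
  then show ?thesis by (simp add: edge_class_inner_edge Inl_notin_inner_edge)
next
  case (lower_spoke i x)
  moreover have "pan_lo i = 0 \<longleftrightarrow> i = 0" by (simp add: pan_lo_def)
  ultimately show ?thesis by (simp add: edge_class_lower_spoke Inl_in_spoke_iff)
next
  case (upper_spoke i x)
  then show ?thesis using pan_lo_less_hi[of i] by (simp add: edge_class_upper_spoke Inl_in_spoke_iff)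
qed

definition upper_spokes :: "(nat + nat \<times> 'a) set set" where
  "upper_spokes = (\<Union>i\<in>{0..r}. spokes i (pan_hi i))"

lemma upper_spokes_subset_E: "upper_spokes \<subseteq> E"
  using spoke_in_E by (auto simp: upper_spokes_def spokes_def pan_edge_eq)

lemma incident_Inr_minus_upper_spoke:
  assumes "i \<le> r" "x \<in> VH i"
  shows "incident (Inr (i, x)) - {spoke i (pan_hi i) x} \<subseteq> E - upper_spokes"
proof
  fix d assume d: "d \<in> incident (Inr (i, x)) - {spoke i (pan_hi i) x}"
  have "d \<notin> upper_spokes"
  proof
    assume "d \<in> upper_spokes"
    then obtain i' y where "d = spoke i' (pan_hi i') y" by (auto simp: upper_spokes_def spokes_def)
    then show False
      using d assms pan_lo_less_hi[of i] spoke_notin_inner_incident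
      by (auto simp: incident_Inr spoke_eq_iff)
  qed
  then show "d \<in> E - upper_spokes" using d by (simp add: incident_def)
qed

lemma exists_class_monotone_labelling:
  obtains f where "bij_betw f E {1..card E}"
    "\<And>e e'. e \<in> E \<Longrightarrow> e' \<in> E \<Longrightarrow> edge_class e < edge_class e' \<Longrightarrow> f e < f e'"
    "\<And>i x y. i \<le> r \<Longrightarrow> x \<in> VH i \<Longrightarrow> y \<in> VH i \<Longrightarrow> x \<noteq> y \<Longrightarrow>
       sum f (incident (Inr (i, x))) \<noteq> sum f (incident (Inr (i, y)))"
proof -
  obtain f0 where f0: "bij_betw f0 E {1..card E}"
    "\<And>e e'. e \<in> E \<Longrightarrow> e' \<in> E \<Longrightarrow> edge_class e < edge_class e' \<Longrightarrow> f0 e < f0 e'"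
    using exists_bij_betw_key_monotone[of E "{1..card E}" edge_class] finite_E by auto
  txt \<open>For the upper spoke \<open>p\<close> of a vertex \<open>x\<close>, \<open>rest p\<close> is the rest of the vertex sum of
    \<open>x\<close>, which the relabelling of the upper spokes leaves unchanged.\<close>
  define rest where "rest e = sum f0 {d \<in> E. d \<noteq> e \<and> (\<exists>z. Inr z \<in> d \<inter> e)}" for e
  have "finite upper_spokes" using finite_E upper_spokes_subset_E finite_subset by blast
  obtain f where f_bij: "bij_betw f E {1..card E}"
    and f_mono: "\<And>e e'. e \<in> E \<Longrightarrow> e' \<in> E \<Longrightarrow> edge_class e < edge_class e' \<Longrightarrow> f e < f e'"
    and f_eq_f0: "\<And>e. e \<in> E - upper_spokes \<Longrightarrow> f e = f0 e"
    and f_ties: "\<And>e e'. e \<in> upper_spokes \<Longrightarrow> e' \<in> upper_spokes \<Longrightarrow>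
      edge_class e = edge_class e' \<Longrightarrow> rest e < rest e' \<Longrightarrow> f e < f e'"
    using exists_key_monotone_bij_refining_ties[where tie = rest,
        OF \<open>finite upper_spokes\<close> upper_spokes_subset_E f0]
    by blast
  have sum_incident_eq:
    "sum f (incident (Inr (i, x))) = f (spoke i (pan_hi i) x) + rest (spoke i (pan_hi i) x)"
    if "i \<le> r" "x \<in> VH i" for i x
  proof -
    let ?p = "spoke i (pan_hi i) x"
    have p: "?p \<in> incident (Inr (i, x))" using that incident_Inr by simp
    have rest_eq: "{d \<in> E. d \<noteq> ?p \<and> (\<exists>z. Inr z \<in> d \<inter> ?p)} = incident (Inr (i, x)) - {?p}"
      by (auto simp: incident_def spoke_def)
    have "sum f (incident (Inr (i, x)) - {?p}) = rest ?p"
      unfolding rest_def rest_eq using f_eq_f0 incident_Inr_minus_upper_spoke[OF that]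
      by (intro sum.cong) auto
    then show ?thesis using sum.remove[OF finite_incident p, of f] by simp
  qed
  show thesis
  proof (rule that[OF f_bij f_mono])
    fix i x y assume i: "i \<le> r" and xy: "x \<in> VH i" "y \<in> VH i" "x \<noteq> y"
    let ?p = "spoke i (pan_hi i) x" and ?q = "spoke i (pan_hi i) y"
    have "?p \<in> upper_spokes" "?q \<in> upper_spokes"
      using i xy by (auto simp: upper_spokes_def spokes_def)
    moreover have "edge_class ?p = edge_class ?q" by (simp add: edge_class_upper_spoke)
    moreover have "f ?p \<noteq> f ?q"
    proof
      assume "f ?p = f ?q"
      then have "?p = ?q"
        using f_bij \<open>?p \<in> upper_spokes\<close> \<open>?q \<in> upper_spokes\<close> upper_spokes_subset_E
        by (auto simp: bij_betw_def dest: inj_onD)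
      then show False using xy(3) by (simp add: spoke_eq_iff)
    qed
    ultimately have "f ?p + rest ?p \<noteq> f ?q + rest ?q"
      using f_ties[of ?p ?q] f_ties[of ?q ?p] by (cases "rest ?p" "rest ?q" rule: linorder_cases) auto
    then show "sum f (incident (Inr (i, x))) \<noteq> sum f (incident (Inr (i, y)))"
      using sum_incident_eq i xy by simp
  qed
qed

end

section \<open>Vertex sums of a class-monotone labelling\<close>

locale class_monotone_labelling = pan_corona +
  fixes f :: "(nat + nat \<times> 'a) set \<Rightarrow> nat"
  assumes f_mono: "\<And>e e'. e \<in> E \<Longrightarrow> e' \<in> E \<Longrightarrow> edge_class e < edge_class e' \<Longrightarrow> f e < f e'"
    and sum_incident_H_inj: "\<And>i x y. i \<le> r \<Longrightarrow> x \<in> VH i \<Longrightarrow> y \<in> VH i \<Longrightarrow> x \<noteq> y \<Longrightarrow>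
          sum f (incident (Inr (i, x))) \<noteq> sum f (incident (Inr (i, y)))"
    and card_incident_u0_le:
      "\<And>i x. i \<le> r \<Longrightarrow> x \<in> VH i \<Longrightarrow> card (incident (Inl 0)) \<le> card (incident (Inr (i, x)))"
    and card_incident_Hr_le:
      "\<And>x. x \<in> VH r \<Longrightarrow> card (incident (Inr (r, x))) \<le> card (incident (Inl 1))"
begin

definition weight :: "nat + nat \<times> 'a \<Rightarrow> nat" where
  "weight v = sum f (incident v)"

lemma weight_Inr:
  assumes "i \<le> r" "x \<in> VH i"
  shows "weight (Inr (i, x)) =
    sum f (inner_incident i x) + f (spoke i (pan_lo i) x) + f (spoke i (pan_hi i) x)"
  using assms finite_inner_incident spoke_notin_inner_incident lower_spoke_neq_upper_spoke
  by (simp add: weight_def incident_Inr sum.union_disjoint)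

lemma weight_H_less_H:
  assumes "i < i'" "i' \<le> r" "x \<in> VH i" "y \<in> VH i'"
  shows "weight (Inr (i, x)) < weight (Inr (i', y))"
proof -
  have "i \<le> r" using assms by simp
  have "sum f (inner_incident i x) \<le> sum f (inner_incident i' y)"
  proof (rule sum_le_sum_if_all_less)
    show "finite (inner_incident i x)" "finite (inner_incident i' y)"
      using finite_inner_incident assms by auto
    show "card (inner_incident i x) \<le> card (inner_incident i' y)"
      using card_inner_incident degree_mono assms by simp
    fix a b assume ab: "a \<in> inner_incident i x" "b \<in> inner_incident i' y"
    have "a \<in> E" "b \<in> E"
      using ab inner_incident_subset_E[of i x] inner_incident_subset_E[of i' y] assms by auto
    moreover have "edge_class a < edge_class b"
      using ab assms edge_class_inner_edge by (auto simp: inner_incident_def)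
    ultimately show "f a < f b" by (rule f_mono)
  qed
  moreover have "f (spoke i (pan_lo i) x) < f (spoke i' (pan_lo i') y)"
    using assms \<open>i \<le> r\<close> by (intro f_mono spoke_in_E) (auto simp: pan_edge_eq edge_class_lower_spoke)
  moreover have "f (spoke i (pan_hi i) x) < f (spoke i' (pan_hi i') y)"
    using assms \<open>i \<le> r\<close> by (intro f_mono spoke_in_E) (auto simp: pan_edge_eq edge_class_upper_spoke)
  ultimately show ?thesis using weight_Inr assms \<open>i \<le> r\<close> by simp
qed

lemma weight_u0_less_H:
  assumes "i \<le> r" "x \<in> VH i"
  shows "weight (Inl 0) < weight (Inr (i, x))"
  unfolding weight_def
proof (rule sum_less_sum_if_all_less_on_diff)
  show "finite (incident (Inl 0))" "finite (incident (Inr (i, x)))" by (rule finite_incident)+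
  show "card (incident (Inl 0)) \<le> card (incident (Inr (i, x)))"
    using card_incident_u0_le assms by blast
  have "base_edge 0 \<in> incident (Inl 0) - incident (Inr (i, x))"
    using base_edge_in_E[of 0] by (auto simp: incident_def Inl_in_base_edge_iff pan_edge_def
      Inr_notin_base_edge)
  then show "incident (Inl 0) - incident (Inr (i, x)) \<noteq> {}" by blast
  fix a b assume "a \<in> incident (Inl 0) - incident (Inr (i, x))"
    and "b \<in> incident (Inr (i, x)) - incident (Inl 0)"
  then have "a \<in> E" "b \<in> E" "Inl 0 \<in> a" "Inl 0 \<notin> b" by (auto simp: incident_def)
  then have "edge_class a < edge_class b"
    using edge_class_le_1_iff[OF \<open>a \<in> E\<close>] edge_class_le_1_iff[OF \<open>b \<in> E\<close>] by simp
  then show "f a < f b" using f_mono \<open>a \<in> E\<close> \<open>b \<in> E\<close> by blast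
qed

text \<open>Condition (d) bounds every degree inside the \<open>H\<^sub>i\<close> by the number of spokes at \<open>u\<^sub>1\<close>.\<close>

lemma degree_H_le:
  assumes "i \<le> r" "x \<in> VH i"
  shows "degree (EH i) x \<le> card (VH 1) + card (VH 2)"
proof -
  obtain y where y: "y \<in> VH r" "degree (EH i) x \<le> degree (EH r) y"
  proof (cases "i = r")
    case False
    obtain y where "y \<in> VH r" using VH_nonempty[of r] by auto
    then show ?thesis using that degree_mono[of i r x y] assms False by simp
  qed (use that assms in auto)
  have "degree (EH r) y + 2 = card (incident (Inr (r, y)))" using card_incident_Inr y by simp
  also have "\<dots> \<le> card (VH 1) + card (VH 2) + 2"
    using card_incident_Hr_le[OF y(1)] card_incident_Inl_1 by simp
  finally show ?thesis using y by simp
qed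

definition attachment_weight :: "nat \<Rightarrow> nat \<Rightarrow> nat" where
  "attachment_weight i j = sum f (attachment i j)"

lemma attachment_weight_eq: "i \<le> r \<Longrightarrow> attachment_weight i j = f (base_edge i) + sum f (spokes i j)"
  using finite_spokes base_edge_notin_spokes by (simp add: attachment_weight_def attachment_def)

lemma weight_Inl:
  assumes "j \<le> r"
  shows "weight (Inl j) = (\<Sum>i | i \<le> r \<and> j \<in> pan_edge r i. attachment_weight i j)"
  unfolding weight_def incident_Inl[OF assms] attachment_weight_def
  using finite_attachment disjoint_attachment by (intro sum.UNION_disjoint) auto

lemma attachment_weight_less:
  assumes "1 \<le> a" "a \<le> b" "b \<le> r" "j < k" "j \<in> pan_edge r a" "k \<in> pan_edge r b"
  shows "attachment_weight a j < attachment_weight b k"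
proof -
  have "sum f (spokes a j) < sum f (spokes b k)"
  proof (rule sum_less_sum_if_all_less)
    show "finite (spokes a j)" "finite (spokes b k)" using finite_spokes assms by auto
    show "spokes a j \<noteq> {}" using VH_nonempty[of a] assms by (simp add: spokes_def)
    show "card (spokes a j) \<le> card (spokes b k)" using card_spokes card_VH_mono assms by simp
    fix p q assume "p \<in> spokes a j" "q \<in> spokes b k"
    then obtain x y where pq: "x \<in> VH a" "p = spoke a j x" "y \<in> VH b" "q = spoke b k y"
      by (auto simp: spokes_def)
    have "edge_class p < edge_class q"
    proof (cases "a = b")
      case True
      then have "j = pan_lo a" "k = pan_hi a" using assms pan_lo_less_hi[of a] by (auto simp: pan_edge_eq)
      then show ?thesis using pq True assms by (simp add: edge_class_lower_spoke edge_class_upper_spoke)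
    next
      case False
      have "edge_class p \<le> r + 3 + 2 * a" "r + 2 + 2 * b \<le> edge_class q"
        using pq assms by (auto simp: edge_class_spoke)
      then show ?thesis using False assms by linarith
    qed
    then show "f p < f q" using f_mono pq spoke_in_E assms by simp
  qed
  moreover have "f (base_edge a) \<le> f (base_edge b)"
    using assms f_mono[OF base_edge_in_E base_edge_in_E, of a b]
    by (cases "a = b") (auto simp: edge_class_base_edge)
  ultimately show ?thesis using assms attachment_weight_eq by simp
qed

lemma attachment_weights_le_weight:
  assumes "1 \<le> j" "j \<le> r"
  shows "attachment_weight (lower_edge j) j + attachment_weight (upper_edge j) j \<le> weight (Inl j)"
proof -
  have "attachment_weight (lower_edge j) j + attachment_weight (upper_edge j) j
      = (\<Sum>i\<in>{lower_edge j, upper_edge j}. attachment_weight i j)"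
    using lower_upper_edge[OF assms] by simp
  also have "\<dots> \<le> (\<Sum>i | i \<le> r \<and> j \<in> pan_edge r i. attachment_weight i j)"
    using pan_edges_at_superset[OF assms] by (intro sum_mono2) auto
  finally show ?thesis using weight_Inl assms by simp
qed

lemma weight_eq_attachment_weights:
  assumes "1 \<le> j" "j < r"
  shows "weight (Inl j) = attachment_weight (lower_edge j) j + attachment_weight (upper_edge j) j"
  using weight_Inl[of j] pan_edges_at_eq[OF assms] lower_upper_edge[of j] assms by simp

lemma weight_cycle_less:
  assumes "1 \<le> j" "j < k" "k \<le> r"
  shows "weight (Inl j) < weight (Inl k)"
proof -
  have "1 \<le> k" "j \<le> r" using assms by auto
  note edges = lower_upper_edge[OF assms(1) \<open>j \<le> r\<close>] lower_upper_edge[OF \<open>1 \<le> k\<close> assms(3)]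
    lower_upper_edge_mono[of j k] mem_pan_edge_lower_upper[OF assms(1) \<open>j \<le> r\<close>]
    mem_pan_edge_lower_upper[OF \<open>1 \<le> k\<close> assms(3)]
  have "attachment_weight (lower_edge j) j < attachment_weight (lower_edge k) k"
    using edges assms by (intro attachment_weight_less) auto
  moreover have "attachment_weight (upper_edge j) j < attachment_weight (upper_edge k) k"
    using edges assms by (intro attachment_weight_less) auto
  ultimately show ?thesis
    using weight_eq_attachment_weights[of j] attachment_weights_le_weight[OF \<open>1 \<le> k\<close> assms(3)] assms
    by simp
qed

lemma sum_inner_incident_le_sum_spokes:
  assumes "i \<le> r" "x \<in> VH i" "1 \<le> j" "j \<le> r"
  shows "sum f (inner_incident i x) \<le> sum f (spokes (lower_edge j) j \<union> spokes (upper_edge j) j)"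
proof (rule sum_le_sum_if_all_less)
  define a b where "a = lower_edge j" and "b = upper_edge j"
  have ab: "1 \<le> a" "a < b" "b \<le> r" "j \<in> pan_edge r a" "j \<in> pan_edge r b"
    using lower_upper_edge[OF assms(3,4)] mem_pan_edge_lower_upper[OF assms(3,4)]
    by (auto simp: a_def b_def)
  show "finite (inner_incident i x)" "finite (spokes a j \<union> spokes b j)"
    using finite_inner_incident finite_spokes assms ab by auto
  have "card (VH 1) \<le> card (VH a)" "card (VH 2) \<le> card (VH b)" using card_VH_mono ab by auto
  then show "card (inner_incident i x) \<le> card (spokes a j \<union> spokes b j)"
    using degree_H_le[OF assms(1,2)] card_inner_incident[OF assms(1)] card_spokes ab
      card_Un_disjoint[OF finite_spokes finite_spokes disjoint_spokes] by simp
  fix p q assume p: "p \<in> inner_incident i x" and q: "q \<in> spokes a j \<union> spokes b j"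
  have "edge_class p \<le> r + 2"
    using p assms edge_class_inner_edge by (auto simp: inner_incident_def)
  moreover have "r + 4 \<le> edge_class q"
    using q ab by (auto simp: spokes_def edge_class_spoke)
  moreover have "p \<in> E" "q \<in> E"
    using p q inner_incident_subset_E[of i x] spokes_subset_E[of a j] spokes_subset_E[of b j] assms ab
    by auto
  ultimately show "f p < f q" using f_mono by simp
qed

lemma weight_H_less_cycle:
  assumes "i \<le> r" "x \<in> VH i" "1 \<le> j" "j \<le> r"
  shows "weight (Inr (i, x)) < weight (Inl j)"
proof -
  define a b where "a = lower_edge j" and "b = upper_edge j"
  have ab: "1 \<le> a" "a < b" "b \<le> r"
    using lower_upper_edge[OF assms(3,4)] by (auto simp: a_def b_def)
  have "f (spoke i (pan_lo i) x) < f (base_edge a)" "f (spoke i (pan_hi i) x) < f (base_edge b)"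
    using assms ab pan_hi_le[of i]
    by (auto intro!: f_mono spoke_in_E base_edge_in_E
      simp: pan_edge_eq edge_class_lower_spoke edge_class_upper_spoke edge_class_base_edge)
  moreover have "sum f (spokes a j \<union> spokes b j) = sum f (spokes a j) + sum f (spokes b j)"
    using finite_spokes ab disjoint_spokes by (simp add: sum.union_disjoint)
  ultimately show ?thesis
    using weight_Inr[OF assms(1,2)] sum_inner_incident_le_sum_spokes[OF assms]
      attachment_weights_le_weight[OF assms(3,4)] attachment_weight_eq ab
    by (simp add: a_def b_def)
qed

lemma weight_Inl_less:
  assumes "j < k" "k \<le> r"
  shows "weight (Inl j) < weight (Inl k)"
proof (cases "j = 0")
  case True
  obtain x where "x \<in> VH 0" using VH_nonempty[of 0] by auto
  then have "weight (Inl 0) < weight (Inr (0, x))" "weight (Inr (0, x)) < weight (Inl k)"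
    using weight_u0_less_H weight_H_less_cycle assms by auto
  then show ?thesis using True by simp
qed (use weight_cycle_less assms in auto)

lemma inj_on_weight: "inj_on weight V"
proof (rule inj_onI, rule ccontr)
  fix v v' assume "v \<in> V" "v' \<in> V" "weight v = weight v'" "v \<noteq> v'"
  from \<open>v \<in> V\<close> \<open>v' \<in> V\<close> show False
  proof (cases rule: V_cases[case_product V_cases])
    case (base_base j k)
    then show False using \<open>weight v = weight v'\<close> \<open>v \<noteq> v'\<close> weight_Inl_less[of j k] weight_Inl_less[of k j]
      by (cases "j < k") auto
  next
    case (base_inner j i x)
    then show False using \<open>weight v = weight v'\<close> weight_u0_less_H[of i x] weight_H_less_cycle[of i x j]
      by (cases "j = 0") auto
  next
    case (inner_base i x j)
    then show False using \<open>weight v = weight v'\<close> weight_u0_less_H[of i x] weight_H_less_cycle[of i x j]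
      by (cases "j = 0") auto
  next
    case (inner_inner i x i' y)
    then show False
      using \<open>weight v = weight v'\<close> \<open>v \<noteq> v'\<close> sum_incident_H_inj[of i x y]
        weight_H_less_H[of i i' x y] weight_H_less_H[of i' i y x]
      by (cases i i' rule: linorder_cases) (auto simp: weight_def)
  qed
qed

lemma antimagic_if_bij: "bij_betw f E {1..card E} \<Longrightarrow> antimagic V E"
  using inj_on_weight unfolding antimagic_def weight_def incident_def by blast

end

theorem theorem1:
  fixes r :: nat and VH :: "nat \<Rightarrow> 'a set" and EH :: "nat \<Rightarrow> 'a set set"
  defines "V\<Gamma> \<equiv> corona_V (pan_V r) {0..r} VH"
      and "E\<Gamma> \<equiv> corona_E (pan_E r) {0..r} (pan_edge r) VH EH"
  assumes r3: "r \<ge> 3"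
      and Hs: "\<And>i. i \<le> r \<Longrightarrow> simple_graph (VH i) (EH i)"
      and Hc: "\<And>i. i \<le> r \<Longrightarrow> connected_graph (VH i) (EH i)"
      and H2: "\<And>i. i \<le> r \<Longrightarrow> card (VH i) \<ge> 2"
      and ord: "\<And>i. i < r \<Longrightarrow> card (VH i) \<le> card (VH (Suc i))"
      and a: "max_degree (VH 0) (EH 0) < min_degree (VH 1) (EH 1)"
      and b: "\<And>i. 1 \<le> i \<Longrightarrow> i \<le> r - 1 \<Longrightarrow>
                 max_degree (VH i) (EH i) \<le> min_degree (VH (Suc i)) (EH (Suc i))"
      and c: "\<And>i. i \<le> r \<Longrightarrow>
                 degree E\<Gamma> (Inl 0) \<le> Min ((\<lambda>x. degree E\<Gamma> (Inr (i, x))) ` VH i)"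
      and d: "Max ((\<lambda>x. degree E\<Gamma> (Inr (r, x))) ` VH r) \<le> degree E\<Gamma> (Inl 1)"
  shows "antimagic V\<Gamma> E\<Gamma>"
proof -
  interpret pan_corona r VH EH
  proof
    show "VH i \<noteq> {}" if "i \<le> r" for i using H2[OF that] by auto
    show "max_degree (VH i) (EH i) \<le> min_degree (VH (Suc i)) (EH (Suc i))" if "i < r" for i
      using a b[of i] that by (cases "i = 0") auto
  qed (use r3 Hs ord in auto)
  have \<Gamma>: "E\<Gamma> = E" "V\<Gamma> = V" by (simp_all add: E\<Gamma>_def V\<Gamma>_def E_def V_def)
  have degree_\<Gamma>: "degree E\<Gamma> v = card (incident v)" for v
    by (simp add: degree_def incident_def \<Gamma>)
  obtain f where f: "bij_betw f E {1..card E}"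
    "\<And>e e'. e \<in> E \<Longrightarrow> e' \<in> E \<Longrightarrow> edge_class e < edge_class e' \<Longrightarrow> f e < f e'"
    "\<And>i x y. i \<le> r \<Longrightarrow> x \<in> VH i \<Longrightarrow> y \<in> VH i \<Longrightarrow> x \<noteq> y \<Longrightarrow>
       sum f (incident (Inr (i, x))) \<noteq> sum f (incident (Inr (i, y)))"
    using exists_class_monotone_labelling by blast
  interpret class_monotone_labelling r VH EH f
  proof
    show "card (incident (Inl 0)) \<le> card (incident (Inr (i, x)))" if "i \<le> r" "x \<in> VH i" for i x
      using order_trans[OF c[OF that(1)] Min_le[OF finite_imageI[OF finite_VH[OF that(1)]]]] that(2)
      by (simp add: degree_\<Gamma>)
    show "card (incident (Inr (r, x))) \<le> card (incident (Inl 1))" if "x \<in> VH r" for x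
      using order_trans[OF Max_ge[OF finite_imageI[OF finite_VH[of r]]] d] that
      by (simp add: degree_\<Gamma>)
  qed (use f in auto)
  show ?thesis using antimagic_if_bij[OF f(1)] by (simp add: \<Gamma>)
qed

end
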